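(* Let $G = K_{m_1} \otimes \cdots \otimes K_{m_t}$ with $m_i \geq 3$ for all $i$, and let $W$ be a resolving set of $G$. Then for every $1 \le i \le t$, $|V(K_{m_i}) \setminus W(i)| \leq 1$.
   Context: $K_r$ is the complete graph on $r$ vertices. The tensor product of graphs has vertex set the Cartesian product of vertex sets, with $(a_1,\dots,a_t)$ adjacent to $(b_1,\dots,b_t)$ iff $a_ib_i$ is an edge of the $i$-th factor for every $i$. For $T \subseteq A_1\times\cdots\times A_t$, $T(i)\subseteq A_i$ denotes the set of elements of $A_i$ appearing as the $i$-th coordinate of some element of $T$. For a connected graph and an ordered set $W=\{w_1,\dots,w_k\}$ of vertices, $r(v\mid W)=(d(v,w_1),\dots,d(v,w_k))$; $W$ is a resolving set if distinct vertices have distinct representations. *)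

theory Defs
  imports Main
begin

text \<open>Vertices of the tensor product K_{m_0} x ... x K_{m_{t-1}}: lists of length t
  whose i-th entry lies in V(K_{m_i}) = {0..<m i}.\<close>
definition tensor_verts :: "nat \<Rightarrow> (nat \<Rightarrow> nat) \<Rightarrow> nat list set" where
  "tensor_verts t m = {xs. length xs = t \<and> (\<forall>i<t. xs ! i < m i)}"

text \<open>Adjacency: every coordinate pair is an edge of the complete graph, i.e. distinct.\<close>
definition tensor_adj :: "nat \<Rightarrow> (nat \<Rightarrow> nat) \<Rightarrow> nat list \<Rightarrow> nat list \<Rightarrow> bool" where
  "tensor_adj t m xs ys \<longleftrightarrow> xs \<in> tensor_verts t m \<and> ys \<in> tensor_verts t m \<and>
     (\<forall>i<t. xs ! i \<noteq> ys ! i)"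

fun walk_of_len :: "('a \<Rightarrow> 'a \<Rightarrow> bool) \<Rightarrow> nat \<Rightarrow> 'a \<Rightarrow> 'a \<Rightarrow> bool" where
  "walk_of_len E 0 x y \<longleftrightarrow> x = y"
| "walk_of_len E (Suc n) x y \<longleftrightarrow> (\<exists>z. E x z \<and> walk_of_len E n z y)"

definition gdist :: "('a \<Rightarrow> 'a \<Rightarrow> bool) \<Rightarrow> 'a \<Rightarrow> 'a \<Rightarrow> nat" where
  "gdist E x y = (LEAST n. walk_of_len E n x y)"

definition resolving_set :: "'a set \<Rightarrow> ('a \<Rightarrow> 'a \<Rightarrow> bool) \<Rightarrow> 'a set \<Rightarrow> bool" where
  "resolving_set V E W \<longleftrightarrow> W \<subseteq> V \<and>
     (\<forall>u\<in>V. \<forall>v\<in>V. (\<forall>w\<in>W. gdist E u w = gdist E v w) \<longrightarrow> u = v)"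

end

theory Submission
  imports Defs "HOL-Combinatorics.Transposition"
begin

text \<open>Swapping two values a \<noteq> b outside W(i) in the i-th coordinate is an automorphism of the
  tensor product fixing W pointwise. It preserves all distances to W, so the two vertices that
  differ only by a \<leftrightarrow> b at coordinate i have the same representation, contradicting resolvability.\<close>

lemma walk_of_len_automorphism_iff:
  assumes "bij f" and "\<And>x y. E (f x) (f y) \<longleftrightarrow> E x y"
  shows "walk_of_len E n (f x) (f y) \<longleftrightarrow> walk_of_len E n x y"
proof (induction n arbitrary: x)
  case 0
  show ?case using bij_is_inj[OF assms(1)] by (simp add: inj_eq)
next
  case (Suc n)
  have "(\<exists>z. E (f x) z \<and> walk_of_len E n z (f y)) \<longleftrightarrow>
        (\<exists>z'. E (f x) (f z') \<and> walk_of_len E n (f z') (f y))"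
    using bij_is_surj[OF assms(1)] by (metis surjD)
  then show ?case using Suc.IH assms(2) by simp
qed

lemma gdist_automorphism:
  assumes "bij f" and "\<And>x y. E (f x) (f y) \<longleftrightarrow> E x y"
  shows "gdist E (f x) (f y) = gdist E x y"
  unfolding gdist_def using walk_of_len_automorphism_iff[of f E, OF assms] by simp

lemma resolving_set_fixed_by_automorphism:
  assumes "resolving_set V E W" and "bij f" and "\<And>x y. E (f x) (f y) \<longleftrightarrow> E x y"
    and "\<And>w. w \<in> W \<Longrightarrow> f w = w" and "x \<in> V" and "f x \<in> V"
  shows "f x = x"
proof -
  have "gdist E (f x) w = gdist E x w" if "w \<in> W" for w
    using gdist_automorphism[of f E, OF assms(2,3), of x w] assms(4)[OF that] by simp
  then show ?thesis using assms(1,5,6) unfolding resolving_set_def by blast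
qed

definition map_coord :: "nat \<Rightarrow> (nat \<Rightarrow> nat) \<Rightarrow> nat list \<Rightarrow> nat list" where
  "map_coord i f xs = xs[i := f (xs ! i)]"

lemma nth_map_coord:
  "j < length xs \<Longrightarrow> map_coord i f xs ! j = (if j = i then f (xs ! i) else xs ! j)"
  by (simp add: map_coord_def nth_list_update)

lemma bij_map_coord:
  assumes "bij f"
  shows "bij (map_coord i f)"
proof (rule bij_betw_byWitness[where f' = "map_coord i (inv f)"])
  show "\<forall>xs\<in>UNIV. map_coord i (inv f) (map_coord i f xs) = xs"
  proof
    fix xs :: "nat list"
    show "map_coord i (inv f) (map_coord i f xs) = xs"
      using bij_is_inj[OF assms]
      by (cases "i < length xs") (simp_all add: map_coord_def list_update_beyond)
  qed
  show "\<forall>xs\<in>UNIV. map_coord i f (map_coord i (inv f) xs) = xs"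
  proof
    fix xs :: "nat list"
    show "map_coord i f (map_coord i (inv f) xs) = xs"
      using bij_is_surj[OF assms]
      by (cases "i < length xs") (simp_all add: map_coord_def list_update_beyond surj_f_inv_f)
  qed
qed auto

lemma tensor_verts_map_coord_iff:
  assumes "\<And>a. f a < m i \<longleftrightarrow> a < m i"
  shows "map_coord i f xs \<in> tensor_verts t m \<longleftrightarrow> xs \<in> tensor_verts t m"
proof -
  have "map_coord i f xs ! j < m j \<longleftrightarrow> xs ! j < m j" if "j < length xs" for j
    using that assms by (simp add: nth_map_coord)
  then show ?thesis by (auto simp: tensor_verts_def map_coord_def)
qed

lemma tensor_adj_map_coord_iff:
  assumes "inj f" and "\<And>a. f a < m i \<longleftrightarrow> a < m i"
  shows "tensor_adj t m (map_coord i f xs) (map_coord i f ys) \<longleftrightarrow> tensor_adj t m xs ys"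
proof -
  have "map_coord i f xs ! j \<noteq> map_coord i f ys ! j \<longleftrightarrow> xs ! j \<noteq> ys ! j"
    if "j < length xs" "j < length ys" for j
    using that inj_eq[OF assms(1)] by (simp add: nth_map_coord)
  then show ?thesis using tensor_verts_map_coord_iff[of f m i, OF assms(2)]
    by (auto simp: tensor_adj_def tensor_verts_def)
qed

lemma resolving_set_tensor_missing_value_unique:
  assumes W: "resolving_set (tensor_verts t m) (tensor_adj t m) W"
    and "i < t" and "\<forall>j<t. m j > 0"
    and a: "a \<in> {0..<m i} - (\<lambda>w. w ! i) ` W" and b: "b \<in> {0..<m i} - (\<lambda>w. w ! i) ` W"
  shows "a = b"
proof -
  let ?f = "map_coord i (transpose a b)"
  have range: "transpose a b c < m i \<longleftrightarrow> c < m i" for c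
    using a b by (auto simp: transpose_def)
  define u where "u = (replicate t 0)[i := a]"
  have u: "u \<in> tensor_verts t m"
    using a \<open>i < t\<close> assms(3) by (auto simp: u_def tensor_verts_def nth_list_update)
  have "?f u = u"
  proof (rule resolving_set_fixed_by_automorphism[where f = ?f, OF W])
    show "bij ?f" by (simp add: bij_map_coord)
    show "tensor_adj t m (?f x) (?f y) \<longleftrightarrow> tensor_adj t m x y" for x y
      by (rule tensor_adj_map_coord_iff[of "transpose a b" m i, OF inj_transpose range])
  next
    fix w assume "w \<in> W"
    then have "w ! i \<noteq> a" "w ! i \<noteq> b" using a b by auto
    then show "?f w = w" by (simp add: map_coord_def)
  next
    show "u \<in> tensor_verts t m" "?f u \<in> tensor_verts t m"
      using u tensor_verts_map_coord_iff[of "transpose a b" m i, OF range] by simp_all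
  qed
  then have "transpose a b (u ! i) = u ! i"
    using \<open>i < t\<close> by (metis length_list_update length_replicate nth_map_coord u_def)
  then show "a = b" using \<open>i < t\<close> by (simp add: u_def)
qed

theorem lemma2p2:
  fixes t :: nat and m :: "nat \<Rightarrow> nat" and W :: "nat list set"
  assumes "\<forall>i<t. m i \<ge> 3"
    and "resolving_set (tensor_verts t m) (tensor_adj t m) W"
  shows "\<forall>i<t. card ({0..<m i} - (\<lambda>w. w ! i) ` W) \<le> 1"
proof (intro allI impI)
  fix i assume "i < t"
  let ?S = "{0..<m i} - (\<lambda>w. w ! i) ` W"
  have "\<forall>j<t. m j > 0" using assms(1) by (simp add: less_le_trans[of 0 3])
  then have "a = b" if "a \<in> ?S" "b \<in> ?S" for a b
    using resolving_set_tensor_missing_value_unique[OF assms(2) \<open>i < t\<close> _ that] by simp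
  then show "card ?S \<le> 1" using card_le_Suc0_iff_eq[of ?S] by auto
qed

end
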